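(* Let $m,n \in \mathbb{N}$ with $n \geq m$. Let $\Xi = [0,1]\times\Pi$ and let $\Gamma$ be the inverse-transform decoder and $d$ the single-token covariance cost defined in the context. Let $\xi,\xi'$ be i.i.d. uniform on $\Xi^n$ (i.e., all $2n$ coordinates $(u,\pi)$ i.i.d. with $u \sim \mathrm{Unif}([0,1])$ and $\pi$ uniform on $\Pi$, independently), and let $Y = \mathtt{generate}(\xi;m,p,\Gamma)$. Then almost surely, for all $i \in [m]$ and $j \in [n]$, $$\mathbb{E}[d(Y_i,\xi_j') - d(Y_i,\xi_i) \mid Y] = C_0\,(1 - p(Y_i \mid Y_{:i-1})).$$
   Context: Vocabulary $\mathcal{V} = [N]$; $\Pi$ is the set of permutations of $[N]$. A language model $p : [N]^* \to \Delta([N])$ gives next-token distributions $p(\cdot \mid x)$; $y_{:i-1} = (y_1,\dots,y_{i-1})$. Decoder: $\Gamma((u,\pi),\mu) := \pi^{-1}(\min\{\pi(i) : \mu(\{j : \pi(j)\le \pi(i)\}) \geq u\})$. $\mathtt{generate}(\xi;m,p,\Gamma)$ for $\xi \in \Xi^n$ outputs $y \in [N]^m$ with $y_i = \Gamma(\xi_i, p(\cdot \mid y_{:i-1}))$, $i=1,\dots,m$. Let $\eta(i) := (i-1)/(N-1)$. For a token $y$ and $(u,\pi) \in \Xi$, $d(y,(u,\pi)) := -(u - 1/2)(\eta(\pi(y)) - 1/2)$. $C_0 := \mathrm{Var}(\eta(I))$ where $I$ is uniform on $[N]$. *)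

theory Defs
  imports "HOL-Probability.Probability" "HOL-Combinatorics.Permutations"
begin

text \<open>Vocabulary [N] = {1..N}; a key is (u, pi) with u a real and pi a permutation of {1..N}.\<close>

type_synonym key = "real \<times> (nat \<Rightarrow> nat)"

definition perms :: "nat \<Rightarrow> (nat \<Rightarrow> nat) set" where
  "perms N = {\<pi>. \<pi> permutes {1..N}}"

definition decode :: "nat \<Rightarrow> key \<Rightarrow> nat pmf \<Rightarrow> nat" where
  "decode N \<xi> \<mu> = (case \<xi> of (u, \<pi>) \<Rightarrow>
     inv_into {1..N} \<pi>
       (Min {\<pi> i | i. i \<in> {1..N} \<and>
                measure_pmf.prob \<mu> {j \<in> {1..N}. \<pi> j \<le> \<pi> i} \<ge> u}))"

text \<open>generate: the first k tokens; keys are indexed 1..n, token y_i uses key xi i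
  and the distribution p(. | y_{:i-1}).\<close>
fun gen :: "nat \<Rightarrow> (nat list \<Rightarrow> nat pmf) \<Rightarrow> (nat \<Rightarrow> key) \<Rightarrow> nat \<Rightarrow> nat list" where
  "gen N p \<xi> 0 = []"
| "gen N p \<xi> (Suc k) = gen N p \<xi> k @ [decode N (\<xi> (Suc k)) (p (gen N p \<xi> k))]"

definition eta :: "nat \<Rightarrow> nat \<Rightarrow> real" where
  "eta N i = (real i - 1) / (real N - 1)"

definition dcost :: "nat \<Rightarrow> nat \<Rightarrow> key \<Rightarrow> real" where
  "dcost N y \<xi> = (case \<xi> of (u, \<pi>) \<Rightarrow> - (u - 1/2) * (eta N (\<pi> y) - 1/2))"

definition C0 :: "nat \<Rightarrow> real" where
  "C0 N = measure_pmf.variance (pmf_of_set {1..N}) (eta N)"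

definition key_measure :: "nat \<Rightarrow> key measure" where
  "key_measure N = uniform_measure lborel {0..1} \<Otimes>\<^sub>M measure_pmf (pmf_of_set (perms N))"

definition keys_measure :: "nat \<Rightarrow> nat \<Rightarrow> (nat \<Rightarrow> key) measure" where
  "keys_measure N n = PiM {1..n} (\<lambda>_. key_measure N)"

end

theory Submission
  imports Defs
begin

text \<open>Conditioning on \<open>Y = ys\<close> conditions on the events \<open>\<Gamma>(\<xi>\<^sub>k, \<mu>\<^sub>k) = ys\<^sub>k\<close>,
  \<open>\<mu>\<^sub>k = p(\<cdot> | ys\<^sub>1 \<dots> ys\<^sub>k\<^sub>-\<^sub>1)\<close>, which concern distinct independent keys, so the conditional law
  of the keys is again a product. The key \<open>\<xi>'\<^sub>j\<close> is independent of \<open>Y\<close>, and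
  \<open>E d(y, \<xi>') = 0\<close> because \<open>u - 1/2\<close> is centred. For \<open>\<xi>\<^sub>i = (u, \<pi>)\<close>, the event
  \<open>\<Gamma>(\<xi>\<^sub>i, \<mu>) = y\<close> is \<open>S\<^sub>\<pi> < u \<le> S\<^sub>\<pi> + q\<close>, where \<open>q = \<mu>(y)\<close> and \<open>S\<^sub>\<pi>\<close> is the
  \<open>\<mu>\<close>-mass of the tokens ranked before \<open>y\<close> by \<open>\<pi>\<close>. Integrating \<open>-(u - 1/2)\<close> over this
  interval gives \<open>-q (S\<^sub>\<pi> + (q - 1)/2)\<close>, and averaging \<open>(\<eta>(\<pi> y) - 1/2)(S\<^sub>\<pi> + (q - 1)/2)\<close>
  over the uniform permutation \<open>\<pi>\<close> gives \<open>C\<^sub>0 (1 - q)\<close>: by symmetry every token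
  \<open>j \<noteq> y\<close> is ranked before \<open>y\<close> with the same \<open>\<eta>\<close>-weighted frequency.\<close>

section \<open>Integrals over product measures\<close>

lemma (in pair_sigma_finite) integrable_fst_snd_mult:
  fixes a :: "'a \<Rightarrow> real" and b :: "'b \<Rightarrow> real"
  assumes a: "integrable M1 a" and b: "integrable M2 b"
  shows "integrable (M1 \<Otimes>\<^sub>M M2) (\<lambda>\<omega>. a (fst \<omega>) * b (snd \<omega>))"
proof (rule Fubini_integrable)
  have "integrable M1 (\<lambda>x. \<bar>a x\<bar> * (\<integral>y. \<bar>b y\<bar> \<partial>M2))"
    using a by (intro integrable_mult_left) simp
  then show "integrable M1 (\<lambda>x. \<integral>y. norm (a (fst (x, y)) * b (snd (x, y))) \<partial>M2)"
    by (simp add: abs_mult)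
qed (use a b in auto)

lemma (in pair_sigma_finite) integral_fst_snd_mult:
  fixes a :: "'a \<Rightarrow> real" and b :: "'b \<Rightarrow> real"
  assumes "integrable M1 a" and "integrable M2 b"
  shows "(\<integral>\<omega>. a (fst \<omega>) * b (snd \<omega>) \<partial>(M1 \<Otimes>\<^sub>M M2)) = integral\<^sup>L M1 a * integral\<^sup>L M2 b"
  using integral_fst'[OF integrable_fst_snd_mult[OF assms]] by simp

lemma (in product_sigma_finite) product_integral_prod_remove:
  fixes f :: "'i \<Rightarrow> 'a \<Rightarrow> real"
  assumes I: "finite I" "i \<in> I" and f: "\<And>k. k \<in> I \<Longrightarrow> integrable (M k) (f k)"
    and g: "integrable (M i) g"
  shows "(\<integral>x. g (x i) * (\<Prod>k\<in>I - {i}. f k (x k)) \<partial>Pi\<^sub>M I M)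
    = integral\<^sup>L (M i) g * (\<Prod>k\<in>I - {i}. integral\<^sup>L (M k) (f k))"
proof -
  let ?f = "f(i := g)"
  have "(\<Prod>k\<in>I. ?f k (x k)) = g (x i) * (\<Prod>k\<in>I - {i}. f k (x k))" for x
    using I by (simp add: prod.remove)
  moreover have "(\<Prod>k\<in>I. integral\<^sup>L (M k) (?f k))
      = integral\<^sup>L (M i) g * (\<Prod>k\<in>I - {i}. integral\<^sup>L (M k) (f k))"
    using I by (simp add: prod.remove)
  moreover have "(\<integral>x. (\<Prod>k\<in>I. ?f k (x k)) \<partial>Pi\<^sub>M I M) = (\<Prod>k\<in>I. integral\<^sup>L (M k) (?f k))"
    using f g I by (intro product_integral_prod) auto
  ultimately show ?thesis
    by simp
qed

lemma (in pair_prob_space) distr_pair_snd: "distr (M1 \<Otimes>\<^sub>M M2) M2 snd = M2"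
proof (rule measure_eqI)
  fix X assume "X \<in> sets (distr (M1 \<Otimes>\<^sub>M M2) M2 snd)"
  then have X: "X \<in> sets M2"
    by simp
  then have "snd -` X \<inter> space (M1 \<Otimes>\<^sub>M M2) = space M1 \<times> X"
    using sets.sets_into_space by (auto simp: space_pair_measure)
  then show "emeasure (distr (M1 \<Otimes>\<^sub>M M2) M2 snd) X = emeasure M2 X"
    using X by (simp add: emeasure_distr M2.emeasure_pair_measure_Times M1.emeasure_space_1)
qed simp

section \<open>Conditional expectation given a discrete random variable\<close>

lemma set_integral_vimage_finite_range:
  fixes Y :: "'a \<Rightarrow> 'b" and h :: "'a \<Rightarrow> real"
  assumes Y: "Y \<in> M \<rightarrow>\<^sub>M count_space UNIV"
    and R: "finite R" "AE \<omega> in M. Y \<omega> \<in> R" and h: "integrable M h"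
  shows "(\<integral>\<omega>\<in>Y -` B \<inter> space M. h \<omega> \<partial>M) = (\<Sum>y\<in>R \<inter> B. \<integral>\<omega>\<in>Y -` {y} \<inter> space M. h \<omega> \<partial>M)"
proof -
  have fibre_sets: "Y -` {y} \<inter> space M \<in> sets M" for y
    by (rule measurable_sets[OF Y]) simp
  have "(\<integral>\<omega>\<in>Y -` B \<inter> space M. h \<omega> \<partial>M)
      = (\<integral>\<omega>. (\<Sum>y\<in>R \<inter> B. indicator (Y -` {y} \<inter> space M) \<omega> *\<^sub>R h \<omega>) \<partial>M)"
    unfolding set_lebesgue_integral_def
  proof (rule integral_cong_AE)
    show "AE \<omega> in M. indicator (Y -` B \<inter> space M) \<omega> *\<^sub>R h \<omega>
        = (\<Sum>y\<in>R \<inter> B. indicator (Y -` {y} \<inter> space M) \<omega> *\<^sub>R h \<omega>)"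
      using R(2) by eventually_elim (auto simp: indicator_def R(1) sum.If_cases)
  qed (use h fibre_sets measurable_sets[OF Y] in auto)
  also have "\<dots> = (\<Sum>y\<in>R \<inter> B. \<integral>\<omega>\<in>Y -` {y} \<inter> space M. h \<omega> \<partial>M)"
    unfolding set_lebesgue_integral_def using h
    by (intro Bochner_Integration.integral_sum integrable_mult_indicator fibre_sets)
  finally show ?thesis .
qed

lemma real_cond_exp_vimage_finite_range:
  fixes Y :: "'a \<Rightarrow> 'b" and f :: "'a \<Rightarrow> real" and c :: "'b \<Rightarrow> real"
  assumes "finite_measure M" and Y: "Y \<in> M \<rightarrow>\<^sub>M count_space UNIV"
    and R: "finite R" "AE \<omega> in M. Y \<omega> \<in> R" and f: "integrable M f"
    and fibre: "\<And>y. y \<in> R \<Longrightarrow>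
      (\<integral>\<omega>\<in>Y -` {y} \<inter> space M. f \<omega> \<partial>M) = c y * measure M (Y -` {y} \<inter> space M)"
  shows "AE \<omega> in M. real_cond_exp M (vimage_algebra (space M) Y (count_space UNIV)) f \<omega> = c (Y \<omega>)"
proof -
  interpret finite_measure M
    by fact
  define F where "F = vimage_algebra (space M) Y (count_space UNIV)"
  have sets_F: "sets F = {Y -` B \<inter> space M |B. B \<in> sets (count_space UNIV)}"
    unfolding F_def by (rule sets_vimage_algebra2) simp
  have "subalgebra M F"
    unfolding subalgebra_def sets_F using measurable_sets[OF Y] by (auto simp: F_def)
  then interpret sigma_finite_subalgebra M F
    by (intro finite_measure_subalgebra_is_sigma_finite finite_measure_subalgebra.intro
        finite_measure_subalgebra_axioms.intro finite_measure_axioms)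
  have g_F: "(\<lambda>\<omega>. c (Y \<omega>)) \<in> borel_measurable F"
    unfolding F_def by (rule measurable_compose[OF measurable_vimage_algebra1]) simp_all
  have g: "integrable M (\<lambda>\<omega>. c (Y \<omega>))"
  proof (rule integrable_const_bound)
    show "AE \<omega> in M. norm (c (Y \<omega>)) \<le> (\<Sum>y\<in>R. \<bar>c y\<bar>)"
      using R(2) by eventually_elim (use R(1) in \<open>auto intro!: member_le_sum\<close>)
  qed (rule measurable_compose[OF Y], simp)
  show ?thesis
    unfolding F_def[symmetric]
  proof (rule real_cond_exp_charact[OF _ f g g_F])
    fix A assume "A \<in> sets F"
    then obtain B where A: "A = Y -` B \<inter> space M"
      by (auto simp: sets_F)
    have fibre_g: "(\<integral>\<omega>\<in>Y -` {y} \<inter> space M. c (Y \<omega>) \<partial>M) = c y * measure M (Y -` {y} \<inter> space M)"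
      for y
      using measurable_sets[OF Y, of "{y}"]
      by (subst set_lebesgue_integral_cong[where g = "\<lambda>_. c y"]) (auto simp: set_integral_const)
    show "(\<integral>\<omega>\<in>A. f \<omega> \<partial>M) = (\<integral>\<omega>\<in>A. c (Y \<omega>) \<partial>M)"
      unfolding A set_integral_vimage_finite_range[OF Y R f, where B = B]
        set_integral_vimage_finite_range[OF Y R g, where B = B]
        fibre_g using fibre by (intro sum.cong) auto
  qed
qed

section \<open>Averages over permutations\<close>

lemma sum_permutes_apply:
  fixes G :: "'a \<Rightarrow> real"
  assumes S: "finite S" and a: "a \<in> S"
  shows "(\<Sum>\<pi> | \<pi> permutes S. G (\<pi> a)) = fact (card S - 1) * (\<Sum>k\<in>S. G k)"
proof -
  let ?P = "{\<pi>. \<pi> permutes S}"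
  have card: "card S > 0"
    using S a card_gt_0_iff by blast
  have same: "(\<Sum>\<pi>\<in>?P. G (\<pi> b)) = (\<Sum>\<pi>\<in>?P. G (\<pi> a))" if "b \<in> S" for b
    using sum_permutations_compose_right[OF permutes_swap_id[OF a that], of "\<lambda>\<pi>. G (\<pi> b)"]
    by simp
  have "real (card S) * (\<Sum>\<pi>\<in>?P. G (\<pi> a)) = (\<Sum>b\<in>S. \<Sum>\<pi>\<in>?P. G (\<pi> b))"
    by (simp add: same)
  also have "\<dots> = (\<Sum>\<pi>\<in>?P. \<Sum>b\<in>S. G (\<pi> b))"
    by (rule sum.swap)
  also have "\<dots> = (\<Sum>\<pi>\<in>?P. \<Sum>k\<in>S. G k)"
    by (intro sum.cong refl sum.reindex_bij_betw permutes_imp_bij) simp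
  also have "\<dots> = real (card S) * (fact (card S - 1) * (\<Sum>k\<in>S. G k))"
    using S by (simp add: card_permutations fact_reduce[OF card])
  finally show ?thesis
    using card by simp
qed

lemma sum_permutes_swap_cong:
  assumes "j \<in> S" "j' \<in> S" "j \<noteq> y" "j' \<noteq> y"
  shows "(\<Sum>\<pi> | \<pi> permutes S. H (\<pi> y) (\<pi> j)) = (\<Sum>\<pi> | \<pi> permutes S. H (\<pi> y) (\<pi> j'))"
  using sum_permutations_compose_right[OF permutes_swap_id[OF assms(1,2)], of "\<lambda>\<pi>. H (\<pi> y) (\<pi> j)"]
    assms(3,4) by simp

lemma card_permutes_less:
  assumes \<pi>: "\<pi> permutes {1..N}" and y: "y \<in> {1..N}"
  shows "card {j \<in> {1..N}. \<pi> j < \<pi> y} = \<pi> y - 1"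
proof -
  have "\<pi> y \<in> {1..N}"
    using permutes_in_image[OF \<pi>] y by blast
  have "\<pi> ` {j \<in> {1..N}. \<pi> j < \<pi> y} = {k \<in> \<pi> ` {1..N}. k < \<pi> y}"
    by auto
  also have "\<dots> = {1..<\<pi> y}"
    using permutes_image[OF \<pi>] \<open>\<pi> y \<in> {1..N}\<close> by auto
  finally have "\<pi> ` {j \<in> {1..N}. \<pi> j < \<pi> y} = {1..<\<pi> y}" .
  moreover have "inj_on \<pi> {j \<in> {1..N}. \<pi> j < \<pi> y}"
    using permutes_inj_on[OF \<pi>] by (rule inj_on_subset) auto
  ultimately show ?thesis
    by (metis card_atLeastLessThan card_image)
qed

text \<open>The hypothesis is needed: \<open>eta 1 1 = 0 / 0 = 0\<close>, so for \<open>N = 1\<close> the sum is \<open>-1/2\<close>.\<close>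

lemma sum_eta_centered:
  assumes "N \<ge> 2"
  shows "(\<Sum>k=1..N. eta N k - 1/2) = 0"
proof -
  have "(\<Sum>k=1..N. real k - 1) = real N * (real N - 1) / 2"
    by (induction N) (simp_all add: field_simps)
  then have "(\<Sum>k=1..N. eta N k) = real N / 2"
    using assms by (simp add: eta_def flip: sum_divide_distrib)
  then show ?thesis
    by (simp add: sum_subtractf)
qed

lemma C0_eq_sum:
  assumes "N \<ge> 2"
  shows "C0 N = (\<Sum>k=1..N. (eta N k - 1/2)\<^sup>2) / N"
proof -
  have ne: "{1..N} \<noteq> {}" "finite {1..N}"
    using assms by auto
  have "measure_pmf.expectation (pmf_of_set {1..N}) (eta N) = (\<Sum>k=1..N. eta N k) / N"
    using integral_pmf_of_set[OF ne, of "eta N"] by simp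
  also have "\<dots> = 1/2"
    using sum_eta_centered[OF assms] assms by (simp add: sum_subtractf)
  finally have mean: "measure_pmf.expectation (pmf_of_set {1..N}) (eta N) = 1/2" .
  show ?thesis
    unfolding C0_def mean using integral_pmf_of_set[OF ne, of "\<lambda>k. (eta N k - 1/2)\<^sup>2"] by simp
qed

text \<open>All \<open>j \<noteq> y\<close> give the same sum (swap \<open>j\<close> with another token); summing over \<open>j\<close>
  counts the \<open>\<pi> y - 1\<close> tokens ranked before \<open>y\<close>, which leaves an average over the rank
  \<open>\<pi> y\<close> alone.\<close>

lemma sum_permutes_less_centered:
  assumes y: "y \<in> {1..N}" and j: "j \<in> {1..N}" "j \<noteq> y"
  shows "(\<Sum>\<pi>\<in>perms N. of_bool (\<pi> j < \<pi> y) * (eta N (\<pi> y) - 1/2)) = fact N * C0 N"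
proof -
  have N: "N \<ge> 2"
    using y j by auto
  define h where "h k = eta N k - 1/2" for k
  define A where "A j' = (\<Sum>\<pi>\<in>perms N. of_bool (\<pi> j' < \<pi> y) * h (\<pi> y))" for j'
  have A_eq: "A j' = A j" if "j' \<in> {1..N} - {y}" for j'
    using sum_permutes_swap_cong[of j' "{1..N}" j y "\<lambda>a b. of_bool (b < a) * h a"] that j
    by (simp add: A_def perms_def)
  have "real (N - 1) * A j = (\<Sum>j'\<in>{1..N} - {y}. A j')"
    using A_eq y by simp
  also have "\<dots> = (\<Sum>j'=1..N. A j')"
    using y by (simp add: sum_diff1 A_def)
  also have "\<dots> = (\<Sum>\<pi>\<in>perms N. h (\<pi> y) * card {j' \<in> {1..N}. \<pi> j' < \<pi> y})"
    unfolding A_def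
    by (subst sum.swap)
      (simp add: sum.If_cases mult.commute Int_def conj_commute flip: sum_distrib_right)
  also have "\<dots> = (\<Sum>\<pi>\<in>perms N. h (\<pi> y) * real (\<pi> y - 1))"
    using y by (intro sum.cong refl) (simp only: perms_def mem_Collect_eq card_permutes_less)
  also have "\<dots> = fact (N - 1) * (\<Sum>k=1..N. h k * real (k - 1))"
    using sum_permutes_apply[of "{1..N}" y "\<lambda>k. h k * real (k - 1)"] y by (simp add: perms_def)
  also have "(\<Sum>k=1..N. h k * real (k - 1)) = real (N - 1) * (\<Sum>k=1..N. h k * eta N k)"
    using N by (simp add: sum_distrib_left eta_def of_nat_diff)
  also have "(\<Sum>k=1..N. h k * eta N k) = (\<Sum>k=1..N. (eta N k - 1/2)\<^sup>2) + (\<Sum>k=1..N. h k) / 2"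
    unfolding sum_divide_distrib sum.distrib[symmetric]
    by (intro sum.cong refl) (simp add: h_def power2_eq_square field_simps)
  also have "\<dots> = real N * C0 N"
    using C0_eq_sum[OF N] sum_eta_centered[OF N] N by (simp add: h_def)
  finally have "real (N - 1) * A j = real (N - 1) * (fact N * C0 N)"
    using N by (simp add: fact_reduce[of N])
  then show ?thesis
    using N by (simp add: A_def h_def)
qed

definition mass_before :: "nat \<Rightarrow> nat pmf \<Rightarrow> (nat \<Rightarrow> nat) \<Rightarrow> nat \<Rightarrow> real" where
  "mass_before N \<mu> \<pi> y = measure_pmf.prob \<mu> {j \<in> {1..N}. \<pi> j < \<pi> y}"

lemma mass_before_eq_sum: "mass_before N \<mu> \<pi> y = (\<Sum>j=1..N. of_bool (\<pi> j < \<pi> y) * pmf \<mu> j)"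
  by (simp add: mass_before_def measure_measure_pmf_finite sum.If_cases Int_def conj_commute)

lemma sum_permutes_covariance:
  assumes supp: "set_pmf \<mu> \<subseteq> {1..N}" and y: "y \<in> {1..N}"
  shows "(\<Sum>\<pi>\<in>perms N. (eta N (\<pi> y) - 1/2) * (mass_before N \<mu> \<pi> y + (pmf \<mu> y - 1)/2))
    = fact N * C0 N * (1 - pmf \<mu> y)"
proof (cases "N = 1")
  case True
  then have "y = 1" "pmf \<mu> 1 = 1"
    using y sum_pmf_eq_1[of "{1..N}" \<mu>] supp by auto
  then show ?thesis
    using True by (simp add: mass_before_eq_sum)
next
  case False
  then have N: "N \<ge> 2"
    using y by auto
  have total: "(\<Sum>j\<in>{1..N} - {y}. pmf \<mu> j) = 1 - pmf \<mu> y"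
    using sum_pmf_eq_1[of "{1..N}" \<mu>] supp y by (simp add: sum_diff1)
  have centered: "(\<Sum>\<pi>\<in>perms N. eta N (\<pi> y) - 1/2) = 0"
    using sum_permutes_apply[of "{1..N}" y "\<lambda>k. eta N k - 1/2"] sum_eta_centered[OF N] y
    by (simp add: perms_def)
  have "(\<Sum>\<pi>\<in>perms N. (eta N (\<pi> y) - 1/2) * mass_before N \<mu> \<pi> y)
      = (\<Sum>j=1..N. pmf \<mu> j * (\<Sum>\<pi>\<in>perms N. of_bool (\<pi> j < \<pi> y) * (eta N (\<pi> y) - 1/2)))"
    unfolding mass_before_eq_sum sum_distrib_left
    by (subst sum.swap) (simp add: mult_ac)
  also have "\<dots> = (\<Sum>j\<in>{1..N} - {y}. pmf \<mu> j *
      (\<Sum>\<pi>\<in>perms N. of_bool (\<pi> j < \<pi> y) * (eta N (\<pi> y) - 1/2)))"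
    using y by (simp add: sum_diff1)
  also have "\<dots> = (\<Sum>j\<in>{1..N} - {y}. pmf \<mu> j * (fact N * C0 N))"
    using y by (intro sum.cong refl) (simp add: sum_permutes_less_centered)
  also have "\<dots> = fact N * C0 N * (1 - pmf \<mu> y)"
    using total by (simp flip: sum_distrib_right)
  finally show ?thesis
    using centered
    by (simp add: distrib_left sum.distrib flip: sum_distrib_right sum_divide_distrib)
qed

section \<open>The inverse-transform decoder\<close>

definition rank_cdf :: "nat \<Rightarrow> nat pmf \<Rightarrow> (nat \<Rightarrow> nat) \<Rightarrow> nat \<Rightarrow> real" where
  "rank_cdf N \<mu> \<pi> r = measure_pmf.prob \<mu> {j \<in> {1..N}. \<pi> j \<le> r}"

lemma mono_rank_cdf: "mono (rank_cdf N \<mu> \<pi>)"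
  unfolding rank_cdf_def by (intro monoI measure_pmf.finite_measure_mono) auto

lemma decode_eq_image:
  "decode N (u, \<pi>) \<mu> = inv_into {1..N} \<pi> (Min (\<pi> ` {i \<in> {1..N}. u \<le> rank_cdf N \<mu> \<pi> (\<pi> i)}))"
  by (simp only: decode_def rank_cdf_def image_Collect prod.case mem_Collect_eq)

lemma decode_permutes:
  assumes \<pi>: "\<pi> permutes {1..N}"
  shows "decode N (u, \<pi>) \<mu> = inv_into {1..N} \<pi> (Min {r \<in> {1..N}. u \<le> rank_cdf N \<mu> \<pi> r})"
proof -
  have "\<pi> ` {i \<in> {1..N}. u \<le> rank_cdf N \<mu> \<pi> (\<pi> i)} = {r \<in> \<pi> ` {1..N}. u \<le> rank_cdf N \<mu> \<pi> r}"
    by auto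
  then show ?thesis
    unfolding decode_eq_image permutes_image[OF \<pi>] by simp
qed

lemma
  assumes \<pi>: "\<pi> permutes {1..N}"
  shows rank_cdf_0: "rank_cdf N \<mu> \<pi> 0 = 0"
    and rank_cdf_top: "set_pmf \<mu> \<subseteq> {1..N} \<Longrightarrow> rank_cdf N \<mu> \<pi> N = 1"
proof -
  have none: "{j \<in> {1..N}. \<pi> j \<le> 0} = {}"
    using permutes_image[OF \<pi>] by fastforce
  show "rank_cdf N \<mu> \<pi> 0 = 0"
    unfolding rank_cdf_def none by simp
  have "{j \<in> {1..N}. \<pi> j \<le> N} = {1..N}"
    using permutes_image[OF \<pi>] by auto
  then show "rank_cdf N \<mu> \<pi> N = 1" if "set_pmf \<mu> \<subseteq> {1..N}"
    using sum_pmf_eq_1[OF _ that] by (simp add: rank_cdf_def measure_measure_pmf_finite)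
qed

lemma
  assumes \<pi>: "\<pi> permutes {1..N}" and y: "y \<in> {1..N}"
  shows rank_cdf_before: "rank_cdf N \<mu> \<pi> (\<pi> y - 1) = mass_before N \<mu> \<pi> y"
    and rank_cdf_at: "rank_cdf N \<mu> \<pi> (\<pi> y) = mass_before N \<mu> \<pi> y + pmf \<mu> y"
proof -
  have "\<pi> y \<ge> 1"
    using permutes_in_image[OF \<pi>] y by auto
  then have "{j \<in> {1..N}. \<pi> j \<le> \<pi> y - 1} = {j \<in> {1..N}. \<pi> j < \<pi> y}"
    by auto
  then show "rank_cdf N \<mu> \<pi> (\<pi> y - 1) = mass_before N \<mu> \<pi> y"
    unfolding rank_cdf_def mass_before_def by simp
  have "{j \<in> {1..N}. \<pi> j \<le> \<pi> y} = insert y {j \<in> {1..N}. \<pi> j < \<pi> y}"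
    using y permutes_inj_on[OF \<pi>] by (auto simp: le_less inj_on_eq_iff)
  then show "rank_cdf N \<mu> \<pi> (\<pi> y) = mass_before N \<mu> \<pi> y + pmf \<mu> y"
    by (simp add: rank_cdf_def mass_before_def measure_measure_pmf_finite)
qed

lemma Min_threshold_eq_iff:
  fixes F :: "nat \<Rightarrow> real"
  assumes F: "mono F" "F 0 < u" and x: "x \<in> {1..N}" and T: "{r \<in> {1..N}. u \<le> F r} \<noteq> {}"
  shows "Min {r \<in> {1..N}. u \<le> F r} = x \<longleftrightarrow> F (x - 1) < u \<and> u \<le> F x"
proof -
  let ?T = "{r \<in> {1..N}. u \<le> F r}"
  have "Min ?T = x \<longleftrightarrow> x \<in> ?T \<and> (\<forall>r\<in>?T. x \<le> r)"
    using T by (intro Min_eq_iff) auto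
  also have "\<dots> \<longleftrightarrow> F (x - 1) < u \<and> u \<le> F x"
  proof
    assume min: "x \<in> ?T \<and> (\<forall>r\<in>?T. x \<le> r)"
    have "F (x - 1) < u"
    proof (cases "x = 1")
      case False
      then have "x - 1 \<notin> ?T"
        using min x by fastforce
      then show ?thesis
        using False x by auto
    qed (use F in simp)
    then show "F (x - 1) < u \<and> u \<le> F x"
      using min by simp
  next
    assume between: "F (x - 1) < u \<and> u \<le> F x"
    have "F r < u" if "r < x" for r
      using monoD[OF F(1), of r "x - 1"] that between by fastforce
    then show "x \<in> ?T \<and> (\<forall>r\<in>?T. x \<le> r)"
      using x between by (auto simp: not_less[symmetric])
  qed
  finally show ?thesis .
qed

lemma decode_eq_iff:
  assumes \<pi>: "\<pi> permutes {1..N}" and supp: "set_pmf \<mu> \<subseteq> {1..N}" and y: "y \<in> {1..N}"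
    and u: "0 < u" "u \<le> 1"
  shows "decode N (u, \<pi>) \<mu> = y \<longleftrightarrow>
    mass_before N \<mu> \<pi> y < u \<and> u \<le> mass_before N \<mu> \<pi> y + pmf \<mu> y"
proof -
  let ?T = "{r \<in> {1..N}. u \<le> rank_cdf N \<mu> \<pi> r}"
  have "N \<in> ?T"
    using u y rank_cdf_top[OF \<pi> supp] by simp
  then have T: "finite ?T" "?T \<noteq> {}"
    by auto
  have "Min ?T \<in> \<pi> ` {1..N}"
    using Min_in[OF T] permutes_image[OF \<pi>] by auto
  then have "inv_into {1..N} \<pi> (Min ?T) = y \<longleftrightarrow> Min ?T = \<pi> y"
    using inv_into_f_f[OF permutes_inj_on[OF \<pi>] y] f_inv_into_f[of "Min ?T" \<pi> "{1..N}"] by auto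
  then have "decode N (u, \<pi>) \<mu> = y \<longleftrightarrow> Min ?T = \<pi> y"
    unfolding decode_permutes[OF \<pi>] .
  also have "\<dots> \<longleftrightarrow> rank_cdf N \<mu> \<pi> (\<pi> y - 1) < u \<and> u \<le> rank_cdf N \<mu> \<pi> (\<pi> y)"
    using permutes_in_image[OF \<pi>] y T(2) rank_cdf_0[OF \<pi>] u
    by (intro Min_threshold_eq_iff mono_rank_cdf) auto
  finally show ?thesis
    unfolding rank_cdf_before[OF \<pi> y] rank_cdf_at[OF \<pi> y] .
qed

lemma measurable_threshold_set:
  fixes c :: "'a \<Rightarrow> real"
  assumes "finite A"
  shows "(\<lambda>u. {i \<in> A. u \<le> c i}) \<in> borel \<rightarrow>\<^sub>M count_space (Pow A)"
proof -
  have "(\<lambda>u. {i \<in> A. u \<le> c i}) -` {B} \<inter> space borel \<in> sets borel" if "B \<subseteq> A" for B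
  proof -
    have "(\<lambda>u. {i \<in> A. u \<le> c i}) -` {B} \<inter> space borel = {u. \<forall>i\<in>A. u \<le> c i \<longleftrightarrow> i \<in> B}"
      using that by auto
    also have "\<dots> \<in> sets borel"
      using assms by measurable
    finally show ?thesis .
  qed
  then show ?thesis
    using assms by (auto simp: measurable_count_space_eq_countable countable_finite)
qed

lemma measurable_decode_fixed_perm [measurable]:
  "(\<lambda>u. decode N (u, \<pi>) \<mu>) \<in> borel \<rightarrow>\<^sub>M count_space UNIV"
proof -
  have "(\<lambda>u. decode N (u, \<pi>) \<mu>) = (\<lambda>B. inv_into {1..N} \<pi> (Min (\<pi> ` B))) \<circ>
      (\<lambda>u. {i \<in> {1..N}. u \<le> rank_cdf N \<mu> \<pi> (\<pi> i)})"
    by (simp add: decode_eq_image comp_def)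
  also have "\<dots> \<in> borel \<rightarrow>\<^sub>M count_space UNIV"
    by (rule measurable_comp[OF measurable_threshold_set measurable_count_space]) simp
  finally show ?thesis .
qed

lemma decode_cong_perm:
  assumes "\<And>i. i \<in> {1..N} \<Longrightarrow> \<pi> i = \<pi>' i"
  shows "decode N (u, \<pi>) \<mu> = decode N (u, \<pi>') \<mu>"
proof -
  have "rank_cdf N \<mu> \<pi> (\<pi> i) = rank_cdf N \<mu> \<pi>' (\<pi>' i)" if "i \<in> {1..N}" for i
    unfolding rank_cdf_def using assms that by (intro arg_cong[where f = "measure_pmf.prob \<mu>"]) auto
  then have "\<pi> ` {i \<in> {1..N}. u \<le> rank_cdf N \<mu> \<pi> (\<pi> i)}
      = \<pi>' ` {i \<in> {1..N}. u \<le> rank_cdf N \<mu> \<pi>' (\<pi>' i)}"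
    using assms by (intro image_cong) auto
  moreover have "inv_into {1..N} \<pi> = inv_into {1..N} \<pi>'"
    unfolding inv_into_def using assms by (intro ext arg_cong[where f = Eps]) auto
  ultimately show ?thesis
    unfolding decode_eq_image by simp
qed

lemma measurable_decode [measurable]:
  "(\<lambda>\<xi>. decode N \<xi> \<mu>) \<in> key_measure N \<rightarrow>\<^sub>M count_space UNIV"
proof -
  \<comment> \<open>only the values on \<open>{1..N}\<close> matter, and these form a list, a countable type\<close>
  let ?perm = "\<lambda>l i. l ! (i - 1)"
  have "decode N \<xi> \<mu> = decode N (fst \<xi>, ?perm (map (snd \<xi>) [1..<N + 1])) \<mu>" for \<xi>
    by (cases \<xi>) (auto intro!: decode_cong_perm simp: nth_map simp del: upt_Suc)
  moreover have "(\<lambda>\<xi>. decode N (fst \<xi>, ?perm (map (snd \<xi>) [1..<N + 1])) \<mu>)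
      \<in> key_measure N \<rightarrow>\<^sub>M count_space UNIV"
  proof (rule measurable_compose_countable[where f = "\<lambda>l \<xi>. decode N (fst \<xi>, ?perm l) \<mu>"])
    show "(\<lambda>\<xi>. map (snd \<xi>) [1..<N + 1]) \<in> key_measure N \<rightarrow>\<^sub>M count_space UNIV"
      unfolding key_measure_def by (rule measurable_compose[OF measurable_snd]) simp
    show "(\<lambda>\<xi>. decode N (fst \<xi>, ?perm l) \<mu>) \<in> key_measure N \<rightarrow>\<^sub>M count_space UNIV" for l
      unfolding key_measure_def by measurable
  qed
  ultimately show ?thesis
    by simp
qed

lemma measurable_dcost [measurable]: "dcost N y \<in> borel_measurable (key_measure N)"
proof -
  have "dcost N y = (\<lambda>\<xi>. - (fst \<xi> - 1/2) * (eta N (snd \<xi> y) - 1/2))"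
    by (auto simp: dcost_def)
  also have "\<dots> \<in> borel_measurable (key_measure N)"
  proof (rule measurable_compose_countable[where f = "\<lambda>k \<xi>. - (fst \<xi> - 1/2) * (eta N k - 1/2)"])
    show "(\<lambda>\<xi>. snd \<xi> y) \<in> key_measure N \<rightarrow>\<^sub>M count_space UNIV"
      unfolding key_measure_def by (rule measurable_compose[OF measurable_snd]) simp
  qed (unfold key_measure_def, measurable)
  finally show ?thesis .
qed

section \<open>A single key\<close>

definition key_support :: "nat \<Rightarrow> key set" where
  "key_support N = {0..1} \<times> perms N"

lemma finite_perms: "finite (perms N)"
  by (simp add: perms_def finite_permutations)

lemma perms_nonempty: "perms N \<noteq> {}"
  unfolding perms_def using permutes_id by blast

lemma prob_space_unit_interval: "prob_space (uniform_measure lborel {0..1::real})"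
  by (rule prob_space_uniform_measure) simp_all

lemma prob_space_key_measure: "prob_space (key_measure N)"
  unfolding key_measure_def
  by (intro prob_space_pair prob_space_unit_interval measure_pmf.prob_space_axioms)

lemma pair_sigma_finite_key_measure:
  "pair_sigma_finite (uniform_measure lborel {0..1::real}) (measure_pmf (pmf_of_set (perms N)))"
  by (intro pair_sigma_finite.intro prob_space_imp_sigma_finite prob_space_unit_interval
      measure_pmf.prob_space_axioms)

lemma AE_key_support: "AE \<xi> in key_measure N. \<xi> \<in> key_support N"
proof -
  interpret pair_sigma_finite "uniform_measure lborel {0..1::real}"
      "measure_pmf (pmf_of_set (perms N))"
    by (rule pair_sigma_finite_key_measure)
  have "{\<xi> \<in> space (key_measure N). \<xi> \<in> key_support N} = {0..1} \<times> perms N"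
    by (auto simp: key_measure_def key_support_def space_pair_measure)
  then have "{\<xi> \<in> space (key_measure N). \<xi> \<in> key_support N} \<in> sets (key_measure N)"
    by (auto simp: key_measure_def intro!: pair_measureI)
  moreover have "AE u in uniform_measure lborel {0..1}. AE \<pi> in measure_pmf (pmf_of_set (perms N)).
      (u, \<pi>) \<in> key_support N"
    by (intro AE_uniform_measureI AE_I2)
      (auto simp: key_support_def AE_measure_pmf_iff finite_perms perms_nonempty)
  ultimately show ?thesis
    unfolding key_measure_def by (rule AE_pair_measure)
qed

lemma integrable_key_measure_bounded:
  fixes F :: "key \<Rightarrow> real"
  assumes "F \<in> borel_measurable (key_measure N)" and "\<And>\<xi>. \<xi> \<in> key_support N \<Longrightarrow> \<bar>F \<xi>\<bar> \<le> B"
  shows "integrable (key_measure N) F"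
proof -
  interpret prob_space "key_measure N"
    by (rule prob_space_key_measure)
  show ?thesis
    using AE_key_support by (rule integrable_const_bound[OF eventually_mono]) (use assms in auto)
qed

lemma integral_key_measure:
  fixes F :: "key \<Rightarrow> real"
  assumes "integrable (key_measure N) F"
  shows "integral\<^sup>L (key_measure N) F
    = (\<Sum>\<pi>\<in>perms N. \<integral>u. F (u, \<pi>) \<partial>uniform_measure lborel {0..1}) / fact N"
proof -
  interpret pair_sigma_finite "uniform_measure lborel {0..1::real}"
      "measure_pmf (pmf_of_set (perms N))"
    by (rule pair_sigma_finite_key_measure)
  have "integral\<^sup>L (key_measure N) F
      = (\<integral>\<pi>. (\<integral>u. F (u, \<pi>) \<partial>uniform_measure lborel {0..1}) \<partial>measure_pmf (pmf_of_set (perms N)))"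
    using integral_snd[of "\<lambda>u \<pi>. F (u, \<pi>)"] assms by (simp add: key_measure_def)
  also have "\<dots> = (\<Sum>\<pi>\<in>perms N. \<integral>u. F (u, \<pi>) \<partial>uniform_measure lborel {0..1}) / fact N"
    using integral_pmf_of_set[OF perms_nonempty finite_perms]
    by (simp add: perms_def card_permutations)
  finally show ?thesis .
qed

lemma integral_unit_interval:
  fixes f :: "real \<Rightarrow> real"
  assumes [measurable]: "f \<in> borel_measurable borel"
  shows "integral\<^sup>L (uniform_measure lborel {0..1}) f = (\<integral>x. f x * indicator {0..1} x \<partial>lborel)"
proof -
  have "uniform_measure lborel {0..1::real} = density lborel (\<lambda>x. ennreal (indicator {0..1} x))"
    unfolding uniform_measure_def by (simp add: ennreal_indicator divide_ennreal_def)
  then show ?thesis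
    by (simp add: integral_density mult.commute)
qed

lemma abs_dcost_le:
  assumes "\<xi> \<in> key_support N" and y: "y \<in> {1..N}"
  shows "\<bar>dcost N y \<xi>\<bar> \<le> 1"
proof -
  obtain u \<pi> where \<xi>: "\<xi> = (u, \<pi>)" and u: "u \<in> {0..1}" and \<pi>: "\<pi> permutes {1..N}"
    using assms(1) by (auto simp: key_support_def perms_def)
  have "\<pi> y \<in> {1..N}"
    using permutes_in_image[OF \<pi>] y by blast
  then have "\<bar>eta N (\<pi> y) - 1/2\<bar> \<le> 1"
    by (auto simp: eta_def divide_simps)
  moreover have "\<bar>u - 1/2\<bar> \<le> 1"
    using u by auto
  ultimately show ?thesis
    by (simp add: \<xi> dcost_def abs_mult mult_le_one)
qed

lemma integral_unit_interval_decode: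
  fixes g G :: "real \<Rightarrow> real"
  assumes \<pi>: "\<pi> permutes {1..N}" and supp: "set_pmf \<mu> \<subseteq> {1..N}" and y: "y \<in> {1..N}"
    and G: "\<And>x. (G has_real_derivative g x) (at x)" and g: "\<And>x. isCont g x"
  shows "(\<integral>u. of_bool (decode N (u, \<pi>) \<mu> = y) * g u \<partial>uniform_measure lborel {0..1})
    = G (mass_before N \<mu> \<pi> y + pmf \<mu> y) - G (mass_before N \<mu> \<pi> y)"
proof -
  define S where "S = mass_before N \<mu> \<pi> y"
  define q where "q = pmf \<mu> y"
  have "S + q = rank_cdf N \<mu> \<pi> (\<pi> y)"
    using rank_cdf_at[OF \<pi> y] by (simp add: S_def q_def)
  then have S: "0 \<le> S" "S + q \<le> 1"
    by (simp_all add: S_def mass_before_def rank_cdf_def)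
  have [measurable]: "g \<in> borel_measurable borel"
    using g by (intro borel_measurable_continuous_onI continuous_at_imp_continuous_on) auto
  have "(\<integral>u. of_bool (decode N (u, \<pi>) \<mu> = y) * g u \<partial>uniform_measure lborel {0..1})
      = (\<integral>u. of_bool (decode N (u, \<pi>) \<mu> = y) * g u * indicator {0..1} u \<partial>lborel)"
    by (rule integral_unit_interval) measurable
  also have "\<dots> = (\<integral>u. g u * indicator {S..S + q} u \<partial>lborel)"
  proof (rule integral_cong_AE)
    show "AE u in lborel. of_bool (decode N (u, \<pi>) \<mu> = y) * g u * indicator {0..1} u
        = g u * indicator {S..S + q} u"
      using AE_lborel_singleton[of 0] AE_lborel_singleton[of S]
    proof eventually_elim
      case (elim u)
      then show ?case
        using decode_eq_iff[OF \<pi> supp y, of u] S by (auto simp: S_def q_def indicator_def)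
    qed
  qed measurable
  also have "\<dots> = G (S + q) - G S"
    using S by (intro integral_FTC_Icc_real G g) (auto simp: q_def)
  finally show ?thesis
    by (simp add: S_def q_def)
qed

lemma integral_decode_indicator:
  assumes supp: "set_pmf \<mu> \<subseteq> {1..N}" and y: "y \<in> {1..N}"
  shows "(\<integral>\<xi>. of_bool (decode N \<xi> \<mu> = y) \<partial>key_measure N) = pmf \<mu> y"
proof -
  have "integrable (key_measure N) (\<lambda>\<xi>. of_bool (decode N \<xi> \<mu> = y) :: real)"
    by (rule integrable_key_measure_bounded[where B = 1]) auto
  then have "((\<integral>\<xi>. of_bool (decode N \<xi> \<mu> = y) \<partial>key_measure N) :: real)
      = (\<Sum>\<pi>\<in>perms N. \<integral>u. of_bool (decode N (u, \<pi>) \<mu> = y) \<partial>uniform_measure lborel {0..1}) / fact N"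
    by (rule integral_key_measure)
  also have "\<dots> = (\<Sum>\<pi>\<in>perms N. pmf \<mu> y) / fact N"
    using integral_unit_interval_decode[OF _ supp y, of _ "\<lambda>x. x" "\<lambda>_. 1"]
    by (intro arg_cong[where f = "\<lambda>x. x / fact N"] sum.cong refl)
      (auto simp: perms_def intro!: derivative_eq_intros)
  also have "\<dots> = pmf \<mu> y"
    by (simp add: perms_def card_permutations)
  finally show ?thesis .
qed

lemma integral_decode_indicator_dcost:
  assumes supp: "set_pmf \<mu> \<subseteq> {1..N}" and y: "y \<in> {1..N}"
  shows "(\<integral>\<xi>. of_bool (decode N \<xi> \<mu> = y) * dcost N y \<xi> \<partial>key_measure N)
    = - C0 N * (1 - pmf \<mu> y) * pmf \<mu> y"
proof -
  define q where "q = pmf \<mu> y"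
  have "integrable (key_measure N) (\<lambda>\<xi>. of_bool (decode N \<xi> \<mu> = y) * dcost N y \<xi>)"
    by (rule integrable_key_measure_bounded[where B = 1])
      (use abs_dcost_le[OF _ y] in \<open>auto simp: abs_mult\<close>)
  then have "(\<integral>\<xi>. of_bool (decode N \<xi> \<mu> = y) * dcost N y \<xi> \<partial>key_measure N)
      = (\<Sum>\<pi>\<in>perms N. \<integral>u. of_bool (decode N (u, \<pi>) \<mu> = y) * dcost N y (u, \<pi>)
          \<partial>uniform_measure lborel {0..1}) / fact N"
    by (rule integral_key_measure)
  also have "\<dots> = (\<Sum>\<pi>\<in>perms N.
      - q * ((eta N (\<pi> y) - 1/2) * (mass_before N \<mu> \<pi> y + (q - 1)/2))) / fact N"
  proof (intro arg_cong[where f = "\<lambda>x. x / fact N"] sum.cong refl)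
    fix \<pi> assume "\<pi> \<in> perms N"
    then have \<pi>: "\<pi> permutes {1..N}"
      by (simp add: perms_def)
    define c where "c = eta N (\<pi> y) - 1/2"
    define S where "S = mass_before N \<mu> \<pi> y"
    have "(\<integral>u. of_bool (decode N (u, \<pi>) \<mu> = y) * dcost N y (u, \<pi>) \<partial>uniform_measure lborel {0..1})
        = (\<integral>u. of_bool (decode N (u, \<pi>) \<mu> = y) * (- (u - 1/2) * c) \<partial>uniform_measure lborel {0..1})"
      by (simp add: dcost_def c_def)
    also have "\<dots> = - ((S + q)\<^sup>2 / 2 - (S + q) / 2) * c - (- (S\<^sup>2 / 2 - S / 2) * c)"
      unfolding S_def q_def
      by (rule integral_unit_interval_decode[OF \<pi> supp y])
        (auto intro!: derivative_eq_intros simp: field_simps)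
    also have "\<dots> = - q * (c * (S + (q - 1) / 2))"
      by (simp add: field_simps power2_eq_square)
    finally show "(\<integral>u. of_bool (decode N (u, \<pi>) \<mu> = y) * dcost N y (u, \<pi>)
          \<partial>uniform_measure lborel {0..1})
        = - q * ((eta N (\<pi> y) - 1/2) * (mass_before N \<mu> \<pi> y + (q - 1)/2))"
      by (simp add: c_def S_def)
  qed
  also have "\<dots> = - q * (\<Sum>\<pi>\<in>perms N.
      (eta N (\<pi> y) - 1/2) * (mass_before N \<mu> \<pi> y + (q - 1)/2)) / fact N"
    by (simp add: sum_distrib_left)
  also have "\<dots> = - q * (fact N * C0 N * (1 - q)) / fact N"
    using sum_permutes_covariance[OF supp y] by (simp add: q_def)
  also have "\<dots> = - C0 N * (1 - q) * q"
    by simp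
  finally show ?thesis
    by (simp add: q_def)
qed

lemma integral_dcost:
  assumes y: "y \<in> {1..N}"
  shows "(\<integral>\<xi>. dcost N y \<xi> \<partial>key_measure N) = 0"
proof -
  have "integrable (key_measure N) (dcost N y)"
    by (rule integrable_key_measure_bounded[where B = 1]) (use abs_dcost_le[OF _ y] in auto)
  moreover have "(\<integral>u. dcost N y (u, \<pi>) \<partial>uniform_measure lborel {0..1}) = 0" for \<pi>
  proof -
    define c where "c = eta N (\<pi> y) - 1/2"
    have "(\<integral>u. dcost N y (u, \<pi>) \<partial>uniform_measure lborel {0..1})
        = (\<integral>u. - (u - 1/2) * c * indicator {0..1} u \<partial>lborel)"
      by (subst integral_unit_interval) (auto simp: dcost_def c_def)
    also have "\<dots> = - (1\<^sup>2 / 2 - 1 / 2) * c - (- (0\<^sup>2 / 2 - 0 / 2) * c)"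
      by (rule integral_FTC_Icc_real[where F = "\<lambda>u. - (u\<^sup>2 / 2 - u / 2) * c"])
        (auto intro!: derivative_eq_intros simp: field_simps)
    finally show ?thesis
      by simp
  qed
  ultimately show ?thesis
    by (simp add: integral_key_measure)
qed

section \<open>Generation\<close>

lemma decode_in_range:
  assumes \<pi>: "\<pi> permutes {1..N}" and supp: "set_pmf \<mu> \<subseteq> {1..N}" and u: "u \<le> 1"
  shows "decode N (u, \<pi>) \<mu> \<in> {1..N}"
proof -
  define T where "T = {r \<in> {1..N}. u \<le> rank_cdf N \<mu> \<pi> r}"
  have "N \<ge> 1"
    using supp set_pmf_not_empty[of \<mu>] by fastforce
  then have "N \<in> T"
    using u rank_cdf_top[OF \<pi> supp] by (simp add: T_def)
  then have "Min T \<in> T"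
    by (intro Min_in) (auto simp: T_def)
  moreover have "T \<subseteq> \<pi> ` {1..N}"
    unfolding permutes_image[OF \<pi>] by (auto simp: T_def)
  ultimately have "Min T \<in> \<pi> ` {1..N}"
    by blast
  then show ?thesis
    unfolding decode_permutes[OF \<pi>] T_def[symmetric] by (rule inv_into_into)
qed

lemma length_gen [simp]: "length (gen N p \<xi> k) = k"
  by (induction k) auto

lemma take_gen: "k \<le> m \<Longrightarrow> take k (gen N p \<xi> m) = gen N p \<xi> k"
  by (induction m) (auto simp: le_Suc_eq)

lemma nth_gen: "k < m \<Longrightarrow> gen N p \<xi> m ! k = decode N (\<xi> (Suc k)) (p (gen N p \<xi> k))"
  by (induction m) (auto simp: less_Suc_eq nth_append)

lemma gen_eq_iff:
  "gen N p \<xi> m = ys \<longleftrightarrow>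
    length ys = m \<and> (\<forall>k\<in>{1..m}. decode N (\<xi> k) (p (take (k - 1) ys)) = ys ! (k - 1))"
proof
  assume "gen N p \<xi> m = ys"
  then show "length ys = m \<and> (\<forall>k\<in>{1..m}. decode N (\<xi> k) (p (take (k - 1) ys)) = ys ! (k - 1))"
    using nth_gen[of "_ - 1" m N p \<xi>] take_gen[of "_ - 1" m N p \<xi>] by auto
next
  assume ys: "length ys = m \<and> (\<forall>k\<in>{1..m}. decode N (\<xi> k) (p (take (k - 1) ys)) = ys ! (k - 1))"
  have "k \<le> m \<Longrightarrow> take k ys = gen N p \<xi> k" for k
  proof (induction k)
    case (Suc k)
    then have "Suc k \<in> {1..m}"
      by simp
    then have "decode N (\<xi> (Suc k)) (p (take k ys)) = ys ! k"
      using ys by (metis diff_Suc_1)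
    then show ?case
      using Suc ys by (simp add: take_Suc_conv_app_nth)
  qed simp
  from this[of m] show "gen N p \<xi> m = ys"
    using ys by simp
qed

lemma set_gen_subset:
  assumes p: "\<And>xs. set xs \<subseteq> {1..N} \<Longrightarrow> set_pmf (p xs) \<subseteq> {1..N}"
  shows "\<forall>k\<in>{1..m}. \<xi> k \<in> key_support N \<Longrightarrow> set (gen N p \<xi> m) \<subseteq> {1..N}"
proof (induction m)
  case (Suc m)
  then have IH: "set (gen N p \<xi> m) \<subseteq> {1..N}"
    by simp
  obtain u \<pi> where "\<xi> (Suc m) = (u, \<pi>)" "u \<le> 1" "\<pi> permutes {1..N}"
    using Suc.prems by (force simp: key_support_def perms_def)
  then have "decode N (\<xi> (Suc m)) (p (gen N p \<xi> m)) \<in> {1..N}"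
    using decode_in_range[OF _ p[OF IH]] by simp
  with IH show ?case
    by simp
qed simp

lemma prob_space_keys_measure: "prob_space (keys_measure N n)"
  unfolding keys_measure_def by (intro prob_space_PiM prob_space_key_measure)

lemma measurable_keys_component:
  "k \<in> {1..n} \<Longrightarrow> (\<lambda>x. x k) \<in> keys_measure N n \<rightarrow>\<^sub>M key_measure N"
  unfolding keys_measure_def by (rule measurable_component_singleton)

lemma AE_keys_support: "AE x in keys_measure N n. \<forall>k\<in>{1..n}. x k \<in> key_support N"
  unfolding keys_measure_def
  by (intro AE_finite_allI AE_PiM_component prob_space_key_measure AE_key_support) auto

lemma integrable_keys_measure_bounded:
  fixes h :: "(nat \<Rightarrow> key) \<Rightarrow> real"
  assumes "h \<in> borel_measurable (keys_measure N n)"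
    and "\<And>x. \<forall>k\<in>{1..n}. x k \<in> key_support N \<Longrightarrow> \<bar>h x\<bar> \<le> B"
  shows "integrable (keys_measure N n) h"
proof -
  interpret prob_space "keys_measure N n"
    by (rule prob_space_keys_measure)
  show ?thesis
    using AE_keys_support by (rule integrable_const_bound[OF eventually_mono]) (use assms in auto)
qed

lemma measurable_gen:
  "m \<le> n \<Longrightarrow> (\<lambda>\<xi>. gen N p \<xi> m) \<in> keys_measure N n \<rightarrow>\<^sub>M count_space UNIV"
proof (induction m)
  case (Suc m)
  have "(\<lambda>\<xi>. gen N p \<xi> m @ [decode N (\<xi> (Suc m)) (p (gen N p \<xi> m))])
      \<in> keys_measure N n \<rightarrow>\<^sub>M count_space UNIV"
  proof (rule measurable_compose_countable[where f = "\<lambda>l \<xi>. l @ [decode N (\<xi> (Suc m)) (p l)]"])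
    show "(\<lambda>\<xi>. gen N p \<xi> m) \<in> keys_measure N n \<rightarrow>\<^sub>M count_space UNIV"
      using Suc by simp
    fix l
    have "(\<lambda>\<xi>. decode N (\<xi> (Suc m)) (p l)) \<in> keys_measure N n \<rightarrow>\<^sub>M count_space UNIV"
      using Suc.prems
      by (intro measurable_compose[OF measurable_keys_component measurable_decode]) simp
    then show "(\<lambda>\<xi>. l @ [decode N (\<xi> (Suc m)) (p l)]) \<in> keys_measure N n \<rightarrow>\<^sub>M count_space UNIV"
      by (rule measurable_compose) simp
  qed
  then show ?case
    by simp
qed simp

lemma integral_keys_measure_component:
  fixes g :: "key \<Rightarrow> real"
  assumes j: "j \<in> {1..n}" and [measurable]: "g \<in> borel_measurable (key_measure N)"
  shows "(\<integral>x. g (x j) \<partial>keys_measure N n) = integral\<^sup>L (key_measure N) g"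
proof -
  have "distr (keys_measure N n) (key_measure N) (\<lambda>x. x j) = key_measure N"
    unfolding keys_measure_def by (rule distr_PiM_component[OF prob_space_key_measure j])
  then show ?thesis
    using integral_distr[OF measurable_keys_component[OF j, of N], of g] by simp
qed

lemma pair_prob_space_keys_measure: "pair_prob_space (keys_measure N n) (keys_measure N n)"
  by (simp add: pair_prob_space_def pair_sigma_finite_def prob_space_keys_measure
      prob_space_imp_sigma_finite)

lemma AE_keys_pair_support:
  "AE \<omega> in keys_measure N n \<Otimes>\<^sub>M keys_measure N n.
    \<forall>k\<in>{1..n}. fst \<omega> k \<in> key_support N \<and> snd \<omega> k \<in> key_support N"
proof -
  interpret pair_prob_space "keys_measure N n" "keys_measure N n"
    by (rule pair_prob_space_keys_measure)
  have "AE \<omega> in keys_measure N n \<Otimes>\<^sub>M keys_measure N n. \<forall>k\<in>{1..n}. fst \<omega> k \<in> key_support N"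
    by (rule AE_distrD[OF measurable_fst])
      (subst prob_space.distr_pair_fst[OF prob_space_keys_measure], rule AE_keys_support)
  moreover have "AE \<omega> in keys_measure N n \<Otimes>\<^sub>M keys_measure N n. \<forall>k\<in>{1..n}. snd \<omega> k \<in> key_support N"
    by (rule AE_distrD[OF measurable_snd]) (subst distr_pair_snd, rule AE_keys_support)
  ultimately show ?thesis
    by eventually_elim auto
qed

lemma measurable_gen_fst:
  "m \<le> n \<Longrightarrow> (\<lambda>\<omega>. gen N p (fst \<omega>) m) \<in> keys_measure N n \<Otimes>\<^sub>M keys_measure N n \<rightarrow>\<^sub>M count_space UNIV"
  by (rule measurable_compose[OF measurable_fst measurable_gen])

lemma AE_set_gen_subset:
  assumes p_supp: "\<And>xs. set xs \<subseteq> {1..N} \<Longrightarrow> set_pmf (p xs) \<subseteq> {1..N}" and mn: "m \<le> n"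
  shows "AE \<omega> in keys_measure N n \<Otimes>\<^sub>M keys_measure N n. set (gen N p (fst \<omega>) m) \<subseteq> {1..N}"
  using AE_keys_pair_support
  by eventually_elim (use mn set_gen_subset[where p = p, OF p_supp] in auto)

section \<open>Conditioning on the generated text\<close>

lemma of_bool_gen_eq_prod:
  assumes "m \<le> n" and "length ys = m"
  shows "of_bool (gen N p x m = ys)
    = (\<Prod>k\<in>{1..n}. of_bool (k \<le> m \<longrightarrow> decode N (x k) (p (take (k - 1) ys)) = ys ! (k - 1)) :: real)"
proof (cases "gen N p x m = ys")
  case True
  then show ?thesis
    using assms by (simp add: gen_eq_iff)
next
  case False
  then obtain k where "k \<in> {1..m}" "decode N (x k) (p (take (k - 1) ys)) \<noteq> ys ! (k - 1)"
    using assms by (auto simp: gen_eq_iff)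
  then show ?thesis
    using False assms by (auto simp: prod_zero_iff intro!: bexI[of _ k])
qed

text \<open>The event \<open>gen N p x m = ys\<close> is an intersection of events on the distinct coordinates
  \<open>x 1, \<dots>, x m\<close>, so under the product measure only the factor of coordinate \<open>i\<close> changes.\<close>

lemma integral_gen_event_dcost:
  assumes p: "\<And>xs. set xs \<subseteq> {1..N} \<Longrightarrow> set_pmf (p xs) \<subseteq> {1..N}"
    and mn: "m \<le> n" and ys: "length ys = m" "set ys \<subseteq> {1..N}" and i: "i \<in> {1..m}"
  shows "(\<integral>x. of_bool (gen N p x m = ys) * dcost N (ys ! (i - 1)) (x i) \<partial>keys_measure N n)
    = - C0 N * (1 - pmf (p (take (i - 1) ys)) (ys ! (i - 1)))
      * (\<integral>x. of_bool (gen N p x m = ys) \<partial>keys_measure N n)"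
proof -
  interpret product_sigma_finite "\<lambda>_. key_measure N"
    unfolding product_sigma_finite_def
    using prob_space_imp_sigma_finite[OF prob_space_key_measure] by simp
  define \<mu> where "\<mu> = p (take (i - 1) ys)"
  define y where "y = ys ! (i - 1)"
  define \<phi> :: "nat \<Rightarrow> key \<Rightarrow> real"
    where "\<phi> k \<xi> = of_bool (k \<le> m \<longrightarrow> decode N \<xi> (p (take (k - 1) ys)) = ys ! (k - 1))" for k \<xi>
  define P where "P = (\<Prod>k\<in>{1..n} - {i}. integral\<^sup>L (key_measure N) (\<phi> k))"
  have i_n: "i \<in> {1..n}"
    using i mn by simp
  have supp: "set_pmf \<mu> \<subseteq> {1..N}"
    unfolding \<mu>_def using ys(2) by (intro p) (meson order_trans set_take_subset)
  have "y \<in> set ys"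
    unfolding y_def using ys(1) i by (intro nth_mem) auto
  then have y_range: "y \<in> {1..N}"
    using ys(2) by blast
  have \<phi>_i: "\<phi> i = (\<lambda>\<xi>. of_bool (decode N \<xi> \<mu> = y))"
    using i by (simp add: \<phi>_def \<mu>_def y_def fun_eq_iff)
  have [measurable]: "\<phi> k \<in> borel_measurable (key_measure N)" for k
    unfolding \<phi>_def by measurable
  have \<phi>_int: "integrable (key_measure N) (\<phi> k)" for k
    by (rule integrable_key_measure_bounded[where B = 1]) (auto simp: \<phi>_def)
  have event: "of_bool (gen N p x m = ys) = \<phi> i (x i) * (\<Prod>k\<in>{1..n} - {i}. \<phi> k (x k))" for x
    using of_bool_gen_eq_prod[OF mn ys(1)] i_n by (simp add: \<phi>_def prod.remove)
  have "(\<integral>x. of_bool (gen N p x m = ys) \<partial>keys_measure N n) = pmf \<mu> y * P"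
    unfolding event keys_measure_def P_def
    using integral_decode_indicator[OF supp y_range]
    by (subst product_integral_prod_remove[OF _ i_n \<phi>_int \<phi>_int]) (simp_all add: \<phi>_i)
  moreover have "(\<integral>x. of_bool (gen N p x m = ys) * dcost N y (x i) \<partial>keys_measure N n)
      = - C0 N * (1 - pmf \<mu> y) * pmf \<mu> y * P"
  proof -
    have int: "integrable (key_measure N) (\<lambda>\<xi>. \<phi> i \<xi> * dcost N y \<xi>)"
      by (rule integrable_key_measure_bounded[where B = 1])
        (use abs_dcost_le[OF _ y_range] in \<open>auto simp: \<phi>_def abs_mult\<close>)
    have "(\<integral>x. of_bool (gen N p x m = ys) * dcost N y (x i) \<partial>keys_measure N n)
        = (\<integral>x. \<phi> i (x i) * dcost N y (x i) * (\<Prod>k\<in>{1..n} - {i}. \<phi> k (x k))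
            \<partial>Pi\<^sub>M {1..n} (\<lambda>_. key_measure N))"
      by (simp add: event keys_measure_def mult_ac)
    also have "\<dots> = (\<integral>\<xi>. \<phi> i \<xi> * dcost N y \<xi> \<partial>key_measure N) * P"
      unfolding P_def by (rule product_integral_prod_remove[OF _ i_n \<phi>_int int]) simp
    finally show ?thesis
      using integral_decode_indicator_dcost[OF supp y_range] by (simp add: \<phi>_i)
  qed
  ultimately show ?thesis
    by (simp add: \<mu>_def y_def)
qed

lemma measure_gen_fibre:
  fixes N m n :: nat and p :: "nat list \<Rightarrow> nat pmf" and ys :: "nat list"
  assumes mn: "m \<le> n"
  defines "M \<equiv> keys_measure N n \<Otimes>\<^sub>M keys_measure N n" and "Y \<equiv> \<lambda>\<omega>. gen N p (fst \<omega>) m"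
  shows "measure M (Y -` {ys} \<inter> space M) = (\<integral>x. of_bool (gen N p x m = ys) \<partial>keys_measure N n)"
proof -
  interpret pair_prob_space "keys_measure N n" "keys_measure N n"
    by (rule pair_prob_space_keys_measure)
  have "measure M (Y -` {ys} \<inter> space M) = (\<integral>\<omega>. indicator (Y -` {ys} \<inter> space M) \<omega> \<partial>M)"
    by (simp add: Int_absorb2)
  also have "\<dots> = (\<integral>\<omega>. of_bool (gen N p (fst \<omega>) m = ys) * 1 \<partial>M)"
    by (intro Bochner_Integration.integral_cong) (auto simp: Y_def indicator_def)
  also have "\<dots> = (\<integral>x. of_bool (gen N p x m = ys) \<partial>keys_measure N n)"
  proof -
    have "(\<lambda>x. of_bool (gen N p x m = ys) :: real) \<in> borel_measurable (keys_measure N n)"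
      using measurable_gen[OF mn] by measurable
    then have "integrable (keys_measure N n) (\<lambda>x. of_bool (gen N p x m = ys) :: real)"
      by (rule integrable_keys_measure_bounded[where B = 1]) simp
    then show ?thesis
      unfolding M_def by (subst integral_fst_snd_mult) (simp_all add: M1.prob_space)
  qed
  finally show ?thesis .
qed

text \<open>On the fibre \<open>Y = ys\<close> the integrand splits into a term depending only on the
  independent keys \<open>\<xi>'\<close>, which has mean zero, and a term depending only on \<open>\<xi>\<close>.\<close>

lemma set_integral_gen_fibre:
  fixes ys :: "nat list"
  assumes p_supp: "\<And>xs. set xs \<subseteq> {1..N} \<Longrightarrow> set_pmf (p xs) \<subseteq> {1..N}"
    and mn: "m \<le> n" and ys: "length ys = m" "set ys \<subseteq> {1..N}"
    and i: "i \<in> {1..m}" and j: "j \<in> {1..n}"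
  defines "M \<equiv> keys_measure N n \<Otimes>\<^sub>M keys_measure N n" and "Y \<equiv> \<lambda>\<omega>. gen N p (fst \<omega>) m"
  shows "(\<integral>\<omega>\<in>Y -` {ys} \<inter> space M.
      dcost N (Y \<omega> ! (i - 1)) (snd \<omega> j) - dcost N (Y \<omega> ! (i - 1)) (fst \<omega> i) \<partial>M)
    = C0 N * (1 - pmf (p (take (i - 1) ys)) (ys ! (i - 1))) * measure M (Y -` {ys} \<inter> space M)"
proof -
  let ?Q = "keys_measure N n"
  interpret pair_prob_space ?Q ?Q
    by (rule pair_prob_space_keys_measure)
  define y where "y = ys ! (i - 1)"
  define \<Phi> :: "(nat \<Rightarrow> key) \<Rightarrow> real" where "\<Phi> = (\<lambda>x. of_bool (gen N p x m = ys))"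
  have "y \<in> set ys"
    unfolding y_def using ys(1) i by (intro nth_mem) auto
  then have y_range: "y \<in> {1..N}"
    using ys(2) by blast
  have i_n: "i \<in> {1..n}"
    using i mn by simp
  have \<Phi>_meas: "\<Phi> \<in> borel_measurable ?Q"
    unfolding \<Phi>_def using measurable_gen[OF mn] by measurable
  have dcost_meas: "(\<lambda>x. dcost N y (x k)) \<in> borel_measurable ?Q" if "k \<in> {1..n}" for k
    using measurable_compose[OF measurable_keys_component[OF that] measurable_dcost] .
  have int_\<Phi>: "integrable ?Q \<Phi>"
    using \<Phi>_meas by (rule integrable_keys_measure_bounded[where B = 1]) (auto simp: \<Phi>_def)
  have int_j: "integrable ?Q (\<lambda>x. dcost N y (x j))"
    using dcost_meas[OF j] by (rule integrable_keys_measure_bounded[where B = 1])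
      (use j abs_dcost_le[OF _ y_range] in auto)
  have int_i: "integrable ?Q (\<lambda>x. \<Phi> x * dcost N y (x i))"
    using borel_measurable_times[OF \<Phi>_meas dcost_meas[OF i_n]]
    by (rule integrable_keys_measure_bounded[where B = 1])
      (use i_n abs_dcost_le[OF _ y_range] in \<open>auto simp: \<Phi>_def\<close>)
  have one: "integrable ?Q (\<lambda>_. 1 :: real)"
    by simp
  have "(\<integral>\<omega>\<in>Y -` {ys} \<inter> space M.
        dcost N (Y \<omega> ! (i - 1)) (snd \<omega> j) - dcost N (Y \<omega> ! (i - 1)) (fst \<omega> i) \<partial>M)
      = (\<integral>\<omega>. \<Phi> (fst \<omega>) * dcost N y (snd \<omega> j) - \<Phi> (fst \<omega>) * dcost N y (fst \<omega> i) * 1 \<partial>M)"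
    unfolding set_lebesgue_integral_def
    by (intro Bochner_Integration.integral_cong) (auto simp: Y_def \<Phi>_def y_def indicator_def)
  also have "\<dots> = (\<integral>\<omega>. \<Phi> (fst \<omega>) * dcost N y (snd \<omega> j) \<partial>M)
      - (\<integral>\<omega>. \<Phi> (fst \<omega>) * dcost N y (fst \<omega> i) * 1 \<partial>M)"
    using integrable_fst_snd_mult[OF int_\<Phi> int_j] integrable_fst_snd_mult[OF int_i one]
    unfolding M_def by (rule Bochner_Integration.integral_diff)
  also have "\<dots> = integral\<^sup>L ?Q \<Phi> * (\<integral>x. dcost N y (x j) \<partial>?Q) - (\<integral>x. \<Phi> x * dcost N y (x i) \<partial>?Q)"
    unfolding M_def integral_fst_snd_mult[OF int_\<Phi> int_j] integral_fst_snd_mult[OF int_i one]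
    by (simp add: M1.prob_space)
  also have "\<dots> = C0 N * (1 - pmf (p (take (i - 1) ys)) (ys ! (i - 1))) * integral\<^sup>L ?Q \<Phi>"
    using integral_gen_event_dcost[OF p_supp mn ys i] integral_keys_measure_component[OF j]
      integral_dcost[OF y_range]
    by (simp add: \<Phi>_def y_def)
  finally show ?thesis
    unfolding M_def Y_def measure_gen_fibre[OF mn] \<Phi>_def .
qed

lemma integrable_dcost_difference:
  assumes p_supp: "\<And>xs. set xs \<subseteq> {1..N} \<Longrightarrow> set_pmf (p xs) \<subseteq> {1..N}"
    and mn: "m \<le> n" and i: "i \<in> {1..m}" and j: "j \<in> {1..n}"
  defines "M \<equiv> keys_measure N n \<Otimes>\<^sub>M keys_measure N n" and "Y \<equiv> \<lambda>\<omega>. gen N p (fst \<omega>) m"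
  shows "integrable M (\<lambda>\<omega>. dcost N (Y \<omega> ! (i - 1)) (snd \<omega> j) - dcost N (Y \<omega> ! (i - 1)) (fst \<omega> i))"
proof -
  interpret pair_prob_space "keys_measure N n" "keys_measure N n"
    by (rule pair_prob_space_keys_measure)
  have i_n: "i \<in> {1..n}"
    using i mn by simp
  have [measurable]: "(\<lambda>x. x k) \<in> keys_measure N n \<rightarrow>\<^sub>M key_measure N" if "k \<in> {i, j}" for k
    using that i_n j by (auto intro: measurable_keys_component)
  have gen_AE: "AE \<omega> in M. set (Y \<omega>) \<subseteq> {1..N}"
    unfolding M_def Y_def by (rule AE_set_gen_subset[where p = p, OF p_supp mn])
  have "(\<lambda>\<omega>. (\<lambda>l \<omega>. dcost N (l ! (i - 1)) (snd \<omega> j) - dcost N (l ! (i - 1)) (fst \<omega> i)) (Y \<omega>) \<omega>)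
      \<in> borel_measurable M"
    unfolding M_def Y_def
    by (rule measurable_compose_countable[OF _ measurable_gen_fst[OF mn]]) measurable
  moreover have "AE \<omega> in M.
      \<bar>dcost N (Y \<omega> ! (i - 1)) (snd \<omega> j) - dcost N (Y \<omega> ! (i - 1)) (fst \<omega> i)\<bar> \<le> 2"
    using AE_keys_pair_support[of n N, folded M_def] gen_AE
  proof eventually_elim
    case (elim \<omega>)
    have "i - 1 < length (Y \<omega>)"
      using i by (auto simp: Y_def)
    then have "Y \<omega> ! (i - 1) \<in> {1..N}"
      using elim nth_mem by blast
    then have "\<bar>dcost N (Y \<omega> ! (i - 1)) (snd \<omega> j)\<bar> \<le> 1" "\<bar>dcost N (Y \<omega> ! (i - 1)) (fst \<omega> i)\<bar> \<le> 1"
      using elim i_n j abs_dcost_le by auto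
    then show ?case
      by arith
  qed
  ultimately show ?thesis
    unfolding M_def by (intro P.integrable_const_bound[where B = 2]) simp_all
qed

theorem lemma3:
  fixes N m n :: nat and p :: "nat list \<Rightarrow> nat pmf"
  assumes p_supp: "\<And>xs. set xs \<subseteq> {1..N} \<Longrightarrow> set_pmf (p xs) \<subseteq> {1..N}"
    and mn: "m \<le> n"
  defines "M \<equiv> keys_measure N n \<Otimes>\<^sub>M keys_measure N n"
    and "Y \<equiv> (\<lambda>\<omega>. gen N p (fst \<omega>) m)"
  shows "AE \<omega> in M. \<forall>i\<in>{1..m}. \<forall>j\<in>{1..n}.
           real_cond_exp M (vimage_algebra (space M) Y (count_space UNIV))
             (\<lambda>\<omega>'. dcost N (Y \<omega>' ! (i - 1)) (snd \<omega>' j) - dcost N (Y \<omega>' ! (i - 1)) (fst \<omega>' i)) \<omega>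
           = C0 N * (1 - pmf (p (take (i - 1) (Y \<omega>))) (Y \<omega> ! (i - 1)))"
proof (intro AE_finite_allI finite_atLeastAtMost)
  fix i j assume i: "i \<in> {1..m}" and j: "j \<in> {1..n}"
  define R where "R = {ys. set ys \<subseteq> {1..N} \<and> length ys = m}"
  have "finite_measure M"
    unfolding M_def by (intro prob_space.finite_measure prob_space_pair prob_space_keys_measure)
  moreover have "Y \<in> M \<rightarrow>\<^sub>M count_space UNIV"
    unfolding M_def Y_def by (rule measurable_gen_fst[OF mn])
  moreover have "finite R"
    by (simp add: R_def finite_lists_length_eq)
  moreover have "AE \<omega> in M. Y \<omega> \<in> R"
    unfolding M_def Y_def R_def using AE_set_gen_subset[where p = p, OF p_supp mn] by simp
  ultimately show "AE \<omega> in M. real_cond_exp M (vimage_algebra (space M) Y (count_space UNIV))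
      (\<lambda>\<omega>'. dcost N (Y \<omega>' ! (i - 1)) (snd \<omega>' j) - dcost N (Y \<omega>' ! (i - 1)) (fst \<omega>' i)) \<omega>
      = C0 N * (1 - pmf (p (take (i - 1) (Y \<omega>))) (Y \<omega> ! (i - 1)))"
    using integrable_dcost_difference[where p = p, OF p_supp mn i j]
      set_integral_gen_fibre[where p = p, OF p_supp mn _ _ i j]
    unfolding M_def Y_def by (intro real_cond_exp_vimage_finite_range) (auto simp: R_def)
qed

end
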